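(* Let $(A\to M,\rho,[\cdot,\cdot])$ be a Lie algebroid and $\nabla\colon\mathfrak X(M)\times\Gamma(A)\to\Gamma(A)$ a linear connection. Consider the 2-representation $(\nabla^{\rm bas},\nabla^{\rm bas},R^{\rm bas}_\nabla)$ of the Lie algebroid $A$ on the complex $\rho\colon A\to TM$, and the 2-representation $(\nabla,\nabla,R_\nabla)$ of the Lie algebroid $TM$ (anchor $\mathrm{Id}_{TM}$, Lie bracket of vector fields) on the complex $\mathrm{Id}_A\colon A\to A$. These two 2-representations form a matched pair, where in the definition of matched pair the first Lie algebroid is $A$, the second is $TM$, the common complex term is $C:=A$, $\partial_B:=\rho\colon A\to TM$ and $\partial_A:=\mathrm{Id}_A$.
   Context: $R_\nabla(X,Y)=\nabla_X\nabla_Y-\nabla_Y\nabla_X-\nabla_{[X,Y]}$. The basic connections are $\nabla^{\rm bas}_aX=[\rho(a),X]+\rho(\nabla_Xa)$ on $TM$ and $\nabla^{\rm bas}_{a_1}a_2=[a_1,a_2]+\nabla_{\rho(a_2)}a_1$ on $A$, and $R^{\rm bas}_\nabla\in\Omega^2(A,\mathrm{Hom}(TM,A))$ is $R^{\rm bas}_\nabla(a_1,a_2)X=-\nabla_X[a_1,a_2]+[\nabla_Xa_1,a_2]+[a_1,\nabla_Xa_2]+\nabla_{\nabla^{\rm bas}_{a_2}X}a_1-\nabla_{\nabla^{\rm bas}_{a_1}X}a_2$. Matched pair: Lie algebroids $A,B$ over $M$, a 2-representation $(\nabla^{AB},\nabla^{AC},R_A)$ of $A$ on $\partial_B\colon C\to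 B$ ($R_A\in\Omega^2(A,\mathrm{Hom}(B,C))$) and $(\nabla^{BA},\nabla^{BC},R_B)$ of $B$ on $\partial_A\colon C\to A$ ($R_B\in\Omega^2(B,\mathrm{Hom}(A,C))$). Writing $\nabla$ for all four connections, they form a matched pair if for all $a,a_i\in\Gamma(A)$, $b,b_i\in\Gamma(B)$, $c,c_i\in\Gamma(C)$: (M1) $\rho_A\partial_A=\rho_B\partial_B$; (M2) $\nabla_{\partial_Ac_1}c_2-\nabla_{\partial_Bc_2}c_1=-\nabla_{\partial_Ac_2}c_1+\nabla_{\partial_Bc_1}c_2$; (M3) $[a,\partial_Ac]=\partial_A(\nabla_ac)-\nabla_{\partial_Bc}a$; (M4) $[b,\partial_Bc]=\partial_B(\nabla_bc)-\nabla_{\partial_Ac}b$; (M5) $[\rho_A(a),\rho_B(b)]=\rho_B(\nabla_ab)-\rho_A(\nabla_ba)$; (M6) $\nabla_b\nabla_ac-\nabla_a\nabla_bc-\nabla_{\nabla_ba}c+\nabla_{\nabla_ab}c=R_B(b,\partial_Bc)a-R_A(a,\partial_Ac)b$; (M7) $\partial_A(R_A(a_1,a_2)b)=-\nabla_b[a_1,a_2]+[\nabla_ba_1,a_2]+[a_1,\nabla_ba_2]+\nabla_{\nabla_{a_2}b}a_1-\nabla_{\nabla_{a_1}b}a_2$; (M8) $\partial_B(R_B(b_1,b_2)a)=-\nabla_a[b_1,b_2]+[\nabla_ab_1,b_2]+[b_1,\nabla_ab_2]+\nabla_{\nabla_{b_2}a}b_1-\nabla_{\nabla_{b_1}a}b_2$;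 (M9) $\mathrm d_{\nabla^A}R_B=\mathrm d_{\nabla^B}R_A$, where $R_B$ is viewed in $\Omega^1(A,\wedge^2B^*\otimes C)$ via $a\mapsto((b_1,b_2)\mapsto R_B(b_1,b_2)a)$, $R_A$ in $\Omega^1(B,\wedge^2A^*\otimes C)$ likewise, $\nabla^A,\nabla^B$ the induced connections on $\wedge^2B^*\otimes C$, $\wedge^2A^*\otimes C$, and $\Omega^2(A,\wedge^2B^*\otimes C)\cong\Omega^2(B,\wedge^2A^*\otimes C)$ via $\omega(a_1,a_2)(b_1,b_2)=\omega'(b_1,b_2)(a_1,a_2)$. *)

theory Defs
  imports Main
begin

text \<open>Algebraic (Lie--Rinehart) model of Lie algebroids.
  The type 'r plays the role of the function ring C^\<infinity>(M);
  the type 'x the vector fields \<X>(M), acting on functions by vf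
  (vf X f = X(f)), with C^\<infinity>(M)-module structure sx and Lie bracket brX;
  a Lie algebroid A is given by its space of sections 'a, with
  module structure sa, bracket brA and anchor rho.\<close>

definition lie_algebroid ::
  "('x \<Rightarrow> 'r::comm_ring_1 \<Rightarrow> 'r) \<Rightarrow> ('r \<Rightarrow> 'x::ab_group_add \<Rightarrow> 'x) \<Rightarrow> ('x \<Rightarrow> 'x \<Rightarrow> 'x)
   \<Rightarrow> ('r \<Rightarrow> 'a::ab_group_add \<Rightarrow> 'a) \<Rightarrow> ('a \<Rightarrow> 'a \<Rightarrow> 'a) \<Rightarrow> ('a \<Rightarrow> 'x) \<Rightarrow> bool" where
  "lie_algebroid vf sx brX sa brA rho \<longleftrightarrow>
     \<comment> \<open>module structure of the sections over the function ring\<close>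
     (\<forall>f g a. sa (f + g) a = sa f a + sa g a) \<and>
     (\<forall>f a b. sa f (a + b) = sa f a + sa f b) \<and>
     (\<forall>f g a. sa (f * g) a = sa f (sa g a)) \<and>
     (\<forall>a. sa 1 a = a) \<and>
     \<comment> \<open>Lie bracket: bi-additive, skew, Jacobi\<close>
     (\<forall>a b c. brA (a + b) c = brA a c + brA b c) \<and>
     (\<forall>a b c. brA a (b + c) = brA a b + brA a c) \<and>
     (\<forall>a b. brA a b = - brA b a) \<and>
     (\<forall>a b c. brA a (brA b c) + brA b (brA c a) + brA c (brA a b) = 0) \<and>
     \<comment> \<open>anchor: C^\<infinity>(M)-linear bundle map, bracket preserving\<close>
     (\<forall>a b. rho (a + b) = rho a + rho b) \<and>
     (\<forall>f a. rho (sa f a) = sx f (rho a)) \<and>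
     (\<forall>a b. rho (brA a b) = brX (rho a) (rho b)) \<and>
     \<comment> \<open>Leibniz rule\<close>
     (\<forall>a b f. brA a (sa f b) = sa f (brA a b) + sa (vf (rho a) f) b)"

definition vector_fields ::
  "('x \<Rightarrow> 'r::comm_ring_1 \<Rightarrow> 'r) \<Rightarrow> ('r \<Rightarrow> 'x::ab_group_add \<Rightarrow> 'x) \<Rightarrow> ('x \<Rightarrow> 'x \<Rightarrow> 'x) \<Rightarrow> bool" where
  "vector_fields vf sx brX \<longleftrightarrow>
     (\<forall>X f g. vf X (f + g) = vf X f + vf X g) \<and>
     (\<forall>X f g. vf X (f * g) = f * vf X g + vf X f * g) \<and>
     (\<forall>X Y f. vf (X + Y) f = vf X f + vf Y f) \<and>
     (\<forall>X g f. vf (sx g X) f = g * vf X f) \<and>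
     (\<forall>X Y f. vf (brX X Y) f = vf X (vf Y f) - vf Y (vf X f)) \<and>
     lie_algebroid vf sx brX sx brX id"

definition connection ::
  "('x \<Rightarrow> 'r::comm_ring_1 \<Rightarrow> 'r) \<Rightarrow> ('r \<Rightarrow> 'x::ab_group_add \<Rightarrow> 'x) \<Rightarrow> ('r \<Rightarrow> 'a::ab_group_add \<Rightarrow> 'a)
   \<Rightarrow> ('x \<Rightarrow> 'a \<Rightarrow> 'a) \<Rightarrow> bool" where
  "connection vf sx sa nabla \<longleftrightarrow>
     (\<forall>X Y a. nabla (X + Y) a = nabla X a + nabla Y a) \<and>
     (\<forall>f X a. nabla (sx f X) a = sa f (nabla X a)) \<and>
     (\<forall>X a b. nabla X (a + b) = nabla X a + nabla X b) \<and>
     (\<forall>X f a. nabla X (sa f a) = sa f (nabla X a) + sa (vf X f) a)"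

definition curv :: "('x \<Rightarrow> 'x \<Rightarrow> 'x) \<Rightarrow> ('x \<Rightarrow> 'a::ab_group_add \<Rightarrow> 'a) \<Rightarrow> 'x \<Rightarrow> 'x \<Rightarrow> 'a \<Rightarrow> 'a" where
  "curv brX nabla X Y a = nabla X (nabla Y a) - nabla Y (nabla X a) - nabla (brX X Y) a"

definition bas_TM :: "('x::ab_group_add \<Rightarrow> 'x \<Rightarrow> 'x) \<Rightarrow> ('a \<Rightarrow> 'x) \<Rightarrow> ('x \<Rightarrow> 'a \<Rightarrow> 'a) \<Rightarrow> 'a \<Rightarrow> 'x \<Rightarrow> 'x" where
  "bas_TM brX rho nabla a X = brX (rho a) X + rho (nabla X a)"

definition bas_A :: "('a::ab_group_add \<Rightarrow> 'a \<Rightarrow> 'a) \<Rightarrow> ('a \<Rightarrow> 'x) \<Rightarrow> ('x \<Rightarrow> 'a \<Rightarrow> 'a) \<Rightarrow> 'a \<Rightarrow> 'a \<Rightarrow> 'a" where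
  "bas_A brA rho nabla a1 a2 = brA a1 a2 + nabla (rho a2) a1"

definition curv_bas ::
  "('x::ab_group_add \<Rightarrow> 'x \<Rightarrow> 'x) \<Rightarrow> ('a::ab_group_add \<Rightarrow> 'a \<Rightarrow> 'a) \<Rightarrow> ('a \<Rightarrow> 'x) \<Rightarrow> ('x \<Rightarrow> 'a \<Rightarrow> 'a)
   \<Rightarrow> 'a \<Rightarrow> 'a \<Rightarrow> 'x \<Rightarrow> 'a" where
  "curv_bas brX brA rho nabla a1 a2 X =
     - nabla X (brA a1 a2) + brA (nabla X a1) a2 + brA a1 (nabla X a2)
     + nabla (bas_TM brX rho nabla a2 X) a1 - nabla (bas_TM brX rho nabla a1 X) a2"

text \<open>Matched pair conditions (M1)--(M9) for a 2-representation
  (nAB, nAC, RA) of A on dB : C \<rightarrow> B and (nBA, nBC, RB) of B on dA : C \<rightarrow> A.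
  (M9) is written out pointwise, evaluated at (a1,a2) and (b1,b2), using the
  exterior covariant derivative of 1-forms and the induced connections on
  \<wedge>^2 B^* \<otimes> C, resp. \<wedge>^2 A^* \<otimes> C.\<close>

definition matched_pair ::
  "('x::ab_group_add \<Rightarrow> 'x \<Rightarrow> 'x)
   \<Rightarrow> ('a::ab_group_add \<Rightarrow> 'a \<Rightarrow> 'a) \<Rightarrow> ('a \<Rightarrow> 'x)
   \<Rightarrow> ('b::ab_group_add \<Rightarrow> 'b \<Rightarrow> 'b) \<Rightarrow> ('b \<Rightarrow> 'x)
   \<Rightarrow> ('c::ab_group_add \<Rightarrow> 'a) \<Rightarrow> ('c \<Rightarrow> 'b)
   \<Rightarrow> ('a \<Rightarrow> 'b \<Rightarrow> 'b) \<Rightarrow> ('a \<Rightarrow> 'c \<Rightarrow> 'c) \<Rightarrow> ('a \<Rightarrow> 'a \<Rightarrow> 'b \<Rightarrow> 'c)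
   \<Rightarrow> ('b \<Rightarrow> 'a \<Rightarrow> 'a) \<Rightarrow> ('b \<Rightarrow> 'c \<Rightarrow> 'c) \<Rightarrow> ('b \<Rightarrow> 'b \<Rightarrow> 'a \<Rightarrow> 'c) \<Rightarrow> bool" where
  "matched_pair brX brA rhoA brB rhoB dA dB nAB nAC RA nBA nBC RB \<longleftrightarrow>
     \<comment> \<open>(M1)\<close>
     (\<forall>c. rhoA (dA c) = rhoB (dB c)) \<and>
     \<comment> \<open>(M2)\<close>
     (\<forall>c1 c2. nAC (dA c1) c2 - nBC (dB c2) c1 = - nAC (dA c2) c1 + nBC (dB c1) c2) \<and>
     \<comment> \<open>(M3)\<close>
     (\<forall>a c. brA a (dA c) = dA (nAC a c) - nBA (dB c) a) \<and>
     \<comment> \<open>(M4)\<close>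
     (\<forall>b c. brB b (dB c) = dB (nBC b c) - nAB (dA c) b) \<and>
     \<comment> \<open>(M5)\<close>
     (\<forall>a b. brX (rhoA a) (rhoB b) = rhoB (nAB a b) - rhoA (nBA b a)) \<and>
     \<comment> \<open>(M6)\<close>
     (\<forall>a b c. nBC b (nAC a c) - nAC a (nBC b c) - nAC (nBA b a) c + nBC (nAB a b) c
              = RB b (dB c) a - RA a (dA c) b) \<and>
     \<comment> \<open>(M7)\<close>
     (\<forall>a1 a2 b. dA (RA a1 a2 b) =
        - nBA b (brA a1 a2) + brA (nBA b a1) a2 + brA a1 (nBA b a2)
        + nBA (nAB a2 b) a1 - nBA (nAB a1 b) a2) \<and>
     \<comment> \<open>(M8)\<close>
     (\<forall>b1 b2 a. dB (RB b1 b2 a) =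
        - nAB a (brB b1 b2) + brB (nAB a b1) b2 + brB b1 (nAB a b2)
        + nAB (nBA b2 a) b1 - nAB (nBA b1 a) b2) \<and>
     \<comment> \<open>(M9)\<close>
     (\<forall>a1 a2 b1 b2.
        (nAC a1 (RB b1 b2 a2) - RB (nAB a1 b1) b2 a2 - RB b1 (nAB a1 b2) a2)
        - (nAC a2 (RB b1 b2 a1) - RB (nAB a2 b1) b2 a1 - RB b1 (nAB a2 b2) a1)
        - RB b1 b2 (brA a1 a2)
      = (nBC b1 (RA a1 a2 b2) - RA (nBA b1 a1) a2 b2 - RA a1 (nBA b1 a2) b2)
        - (nBC b2 (RA a1 a2 b1) - RA (nBA b2 a1) a2 b1 - RA a1 (nBA b2 a2) b1)
        - RA a1 a2 (brB b1 b2))"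

end

theory Submission
  imports Defs HOL.Modules
begin

(* In the algebraic model the four connections of the two 2-representations
   and the two curvatures are explicit expressions in the bracket brA of A, the bracket
   brX of vector fields, the anchor rho and the connection nabla.  Each matched-pair
   condition (M1)-(M9) therefore becomes an identity between such expressions, and
   only the additive structure enters: bi-additivity and skew-symmetry of both
   brackets, the Jacobi identity for vector fields, additivity of rho and
   bi-additivity of nabla.  The
   remaining conditions (M1), (M3), (M5), (M7) are the definitions of the basic
   connections and of the basic curvature, so the main theorem follows at once. *)

locale bracket_connection_data =
  fixes brX :: "'x::ab_group_add \<Rightarrow> 'x \<Rightarrow> 'x"
    and brA :: "'a::ab_group_add \<Rightarrow> 'a \<Rightarrow> 'a"
    and rho :: "'a \<Rightarrow> 'x"
    and nabla :: "'x \<Rightarrow> 'a \<Rightarrow> 'a"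
  assumes brX_add_left: "brX (X + Y) Z = brX X Z + brX Y Z"
    and brX_add_right: "brX X (Y + Z) = brX X Y + brX X Z"
    and brX_skew: "brX X Y = - brX Y X"
    and brX_jacobi: "brX X (brX Y Z) + brX Y (brX Z X) + brX Z (brX X Y) = 0"
    and brA_add_left: "brA (a + b) c = brA a c + brA b c"
    and brA_add_right: "brA a (b + c) = brA a b + brA a c"
    and brA_skew: "brA a b = - brA b a"
    and rho_add: "rho (a + b) = rho a + rho b"
    and nabla_add_left: "nabla (X + Y) a = nabla X a + nabla Y a"
    and nabla_add_right: "nabla X (a + b) = nabla X a + nabla X b"

lemma bracket_connection_data_of_lie_algebroid:
  assumes "vector_fields vf sx brX"
    and "lie_algebroid vf sx brX sa brA rho"
    and "connection vf sx sa nabla"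
  shows "bracket_connection_data brX brA rho nabla"
proof -
  have "lie_algebroid vf sx brX sx brX id"
    using assms(1) unfolding vector_fields_def by blast
  note tangent = this[unfolded lie_algebroid_def]
    and algebroid = assms(2)[unfolded lie_algebroid_def]
    and conn = assms(3)[unfolded connection_def]
  show ?thesis
    by (rule bracket_connection_data.intro; use tangent algebroid conn in metis)
qed

context bracket_connection_data
begin

lemma brX_left_additive: "additive (\<lambda>X. brX X Z)"
  by unfold_locales (rule brX_add_left)

lemma brX_right_additive: "additive (brX X)"
  by unfold_locales (rule brX_add_right)

lemma brA_left_additive: "additive (\<lambda>a. brA a c)"
  by unfold_locales (rule brA_add_left)

lemma brA_right_additive: "additive (brA a)"
  by unfold_locales (rule brA_add_right)

lemma rho_additive: "additive rho"
  by unfold_locales (rule rho_add)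

lemma nabla_left_additive: "additive (\<lambda>X. nabla X a)"
  by unfold_locales (rule nabla_add_left)

lemma nabla_right_additive: "additive (nabla X)"
  by unfold_locales (rule nabla_add_right)

lemmas additivity =
  brX_add_left brX_add_right brA_add_left brA_add_right rho_add nabla_add_left nabla_add_right
  additive.minus[OF brX_left_additive] additive.minus[OF brX_right_additive]
  additive.minus[OF brA_left_additive] additive.minus[OF brA_right_additive]
  additive.minus[OF rho_additive]
  additive.minus[OF nabla_left_additive] additive.minus[OF nabla_right_additive]
  additive.diff[OF brX_left_additive] additive.diff[OF brX_right_additive]
  additive.diff[OF brA_left_additive] additive.diff[OF brA_right_additive]
  additive.diff[OF rho_additive]
  additive.diff[OF nabla_left_additive] additive.diff[OF nabla_right_additive]

lemma brX_derivation: "brX X (brX Y Z) = brX Y (brX X Z) + brX (brX X Y) Z"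
proof -
  have "brX Y (brX Z X) = - brX Y (brX X Z)"
    using brX_skew[of Z X] by (simp add: additivity)
  moreover have "brX Z (brX X Y) = - brX (brX X Y) Z"
    by (rule brX_skew)
  ultimately show ?thesis
    using brX_jacobi[of X Y Z] by (simp add: algebra_simps)
qed

lemmas basic_defs = curv_def bas_TM_def bas_A_def curv_bas_def

text \<open>(M2): both sides equal the bracket [c1,c2], by skew-symmetry.\<close>

lemma matched_M2:
  "bas_A brA rho nabla c1 c2 - nabla (rho c2) c1 = - bas_A brA rho nabla c2 c1 + nabla (rho c1) c2"
  using brA_skew[of c1 c2] by (simp add: basic_defs)

lemma matched_M4: "brX X (rho c) = rho (nabla X c) - bas_TM brX rho nabla c X"
  using brX_skew[of X "rho c"] by (simp add: basic_defs)

text \<open>(M6): after expanding the basic connections, the only terms not cancelling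
  directly are nabla_[X,rho c] a and nabla_[rho c,X] a, which cancel by skew-symmetry.\<close>

lemma matched_M6:
  "nabla X (bas_A brA rho nabla a c) - bas_A brA rho nabla a (nabla X c)
    - bas_A brA rho nabla (nabla X a) c + nabla (bas_TM brX rho nabla a X) c
  = curv brX nabla X (rho c) a - curv_bas brX brA rho nabla a c X"
proof -
  have "brX X (rho c) = - brX (rho c) X"
    by (rule brX_skew)
  then show ?thesis
    by (simp add: basic_defs additivity algebra_simps)
qed

text \<open>After expansion the terms in rho(a) cancel by the Jacobi identity, the terms
  [X, rho(nabla_Y a)] by skew-symmetry, and rho of the curvature remains.\<close>

lemma matched_M8:
  "rho (curv brX nabla X Y a) =
    - bas_TM brX rho nabla a (brX X Y) + brX (bas_TM brX rho nabla a X) Y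
    + brX X (bas_TM brX rho nabla a Y) + bas_TM brX rho nabla (nabla Y a) X - bas_TM brX rho nabla (nabla X a) Y"
proof -
  have "brX X (rho (nabla Y a)) = - brX (rho (nabla Y a)) X"
    by (rule brX_skew)
  moreover have "brX (rho a) (brX X Y) = brX X (brX (rho a) Y) + brX (brX (rho a) X) Y"
    by (rule brX_derivation)
  ultimately show ?thesis
    by (simp add: basic_defs additivity algebra_simps)
qed

text \<open>Both sides expand into iterated covariant derivatives, brackets and anchors.  They
  match after three rewritings: the bracket [a2, R(X,Y)a1] is turned around by
  skew-symmetry of brA, the brackets [X, rho(nabla_Y a)] by skew-symmetry of brX, and
  the double brackets [rho(a),[X,Y]] are expanded by the Jacobi identity.\<close>

lemma matched_M9:
  "(bas_A brA rho nabla a1 (curv brX nabla X Y a2) - curv brX nabla (bas_TM brX rho nabla a1 X) Y a2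
      - curv brX nabla X (bas_TM brX rho nabla a1 Y) a2)
    - (bas_A brA rho nabla a2 (curv brX nabla X Y a1) - curv brX nabla (bas_TM brX rho nabla a2 X) Y a1
      - curv brX nabla X (bas_TM brX rho nabla a2 Y) a1)
    - curv brX nabla X Y (brA a1 a2)
  = (nabla X (curv_bas brX brA rho nabla a1 a2 Y) - curv_bas brX brA rho nabla (nabla X a1) a2 Y
      - curv_bas brX brA rho nabla a1 (nabla X a2) Y)
    - (nabla Y (curv_bas brX brA rho nabla a1 a2 X) - curv_bas brX brA rho nabla (nabla Y a1) a2 X
      - curv_bas brX brA rho nabla a1 (nabla Y a2) X)
    - curv_bas brX brA rho nabla a1 a2 (brX X Y)"
proof -
  have "brA a2 (curv brX nabla X Y a1) = - brA (curv brX nabla X Y a1) a2"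
    by (rule brA_skew)
  moreover have "brX X (rho (nabla Y a)) = - brX (rho (nabla Y a)) X" for a
    by (rule brX_skew)
  moreover have "brX (rho a) (brX X Y) = brX X (brX (rho a) Y) + brX (brX (rho a) X) Y" for a
    by (rule brX_derivation)
  ultimately show ?thesis
    by (simp add: basic_defs additivity algebra_simps)
qed

end

text \<open>Conditions (M1), (M3), (M5) and (M7) hold by the very definitions of the basic
  connections and the basic curvature.\<close>

theorem mainTheorem3:
  fixes vf :: "'x::ab_group_add \<Rightarrow> 'r::comm_ring_1 \<Rightarrow> 'r"
    and sx :: "'r \<Rightarrow> 'x \<Rightarrow> 'x"
    and brX :: "'x \<Rightarrow> 'x \<Rightarrow> 'x"
    and sa :: "'r \<Rightarrow> 'a::ab_group_add \<Rightarrow> 'a"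
    and brA :: "'a \<Rightarrow> 'a \<Rightarrow> 'a"
    and rho :: "'a \<Rightarrow> 'x"
    and nabla :: "'x \<Rightarrow> 'a \<Rightarrow> 'a"
  assumes "vector_fields vf sx brX"
    and "lie_algebroid vf sx brX sa brA rho"
    and "connection vf sx sa nabla"
  shows "matched_pair brX brA rho brX id id rho
           (bas_TM brX rho nabla) (bas_A brA rho nabla) (curv_bas brX brA rho nabla)
           nabla nabla (curv brX nabla)"
proof -
  interpret bracket_connection_data brX brA rho nabla
    using assms by (rule bracket_connection_data_of_lie_algebroid)
  show ?thesis
    unfolding matched_pair_def id_apply
    by (intro conjI allI matched_M2 matched_M4 matched_M6 matched_M8 matched_M9)
       (simp_all add: bas_TM_def bas_A_def curv_bas_def)
qed

end
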